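(* Let $R$ be a ring and let $C_\infty$ be the connected component of the point $R(1,0)$ in the distant graph of $\mathbb{P}(R)$. Then the stabilizer of $C_\infty$ in $\mathrm{GL}_2(R)$ (i.e. the set of $G\in\mathrm{GL}_2(R)$ with $C_\infty^G=C_\infty$) equals $\mathrm{GE}_2(R)$.
   Context: $R$ is an associative ring with unit element $1$ (the case $1=0$ is allowed); $R^*$ denotes its group of units and $\mathrm{GL}_2(R)$ the group of invertible $2\times2$ matrices over $R$. A pair $(a,b)\in R^2$ is admissible if it is the first row of some matrix in $\mathrm{GL}_2(R)$. The projective line $\mathbb{P}(R)$ is the set of all cyclic submodules $R(a,b)=\{(ra,rb):r\in R\}$ of the left $R$-module $R^2$ with $(a,b)$ admissible; points are always represented by admissible pairs, and two admissible pairs represent the same point iff one is obtained from the other by left multiplication with a unit. $\mathrm{GL}_2(R)$ acts on $\mathbb{P}(R)$ by $R(a,b)\mapsto R((a,b)G)$. Two points $R(a,b)$, $R(c,d)$ are distant iff $\begin{pmatrix}a&b\\c&d\end{pmatrix}\in\mathrm{GL}_2(R)$. The distant graph has vertex set $\mathbb{P}(R)$ and edges the unordered pairs of distant points; connected components refer to this graph. The elementary matrices are $B_{12}(t)=\begin{pmatrix}1&t\\0&1\end{pmatrix}$ and $B_{21}(t)=\begin{pmatrix}1&0\\t&1\end{pmatrix}$ ($t\in R$); $\mathrm{E}_2(R)$ is the subgroup they generate, and $\mathrm{GE}_2(R)$ is the subgroup of $\mathrm{GL}_2(R)$ generated by $\mathrm{E}_2(R)$ together with all invertible diagonal matrices.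 *)

theory Defs
  imports Main
begin

text \<open>Rings: associative rings with unit; the sort {ring, monoid_mult} does not
  require 1 \<noteq> 0 (unlike ring_1), so the zero ring is allowed.\<close>

datatype 'a mat2 = M2 'a 'a 'a 'a

fun mmul :: "'a::{ring,monoid_mult} mat2 \<Rightarrow> 'a mat2 \<Rightarrow> 'a mat2" where
  "mmul (M2 a b c d) (M2 a' b' c' d') =
     M2 (a*a' + b*c') (a*b' + b*d') (c*a' + d*c') (c*b' + d*d')"

definition mone :: "'a::{ring,monoid_mult} mat2" where
  "mone = M2 1 0 0 1"

definition GL2 :: "'a::{ring,monoid_mult} mat2 set" where
  "GL2 = {M. \<exists>N. mmul M N = mone \<and> mmul N M = mone}"

definition ring_units :: "'a::{ring,monoid_mult} set" where
  "ring_units = {u. \<exists>v. u * v = 1 \<and> v * u = 1}"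

fun vmul :: "'a::{ring,monoid_mult} \<times> 'a \<Rightarrow> 'a mat2 \<Rightarrow> 'a \<times> 'a" where
  "vmul (x, y) (M2 a b c d) = (x*a + y*c, x*b + y*d)"

definition admissible :: "'a::{ring,monoid_mult} \<times> 'a \<Rightarrow> bool" where
  "admissible v = (\<exists>c d. M2 (fst v) (snd v) c d \<in> GL2)"

definition cyc :: "'a::{ring,monoid_mult} \<times> 'a \<Rightarrow> ('a \<times> 'a) set" where
  "cyc v = {(r * fst v, r * snd v) | r. True}"

definition proj_line :: "('a::{ring,monoid_mult} \<times> 'a) set set" where
  "proj_line = {cyc v | v. admissible v}"

definition pt_act :: "('a::{ring,monoid_mult} \<times> 'a) set \<Rightarrow> 'a mat2 \<Rightarrow> ('a \<times> 'a) set" where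
  "pt_act p G = (\<lambda>v. vmul v G) ` p"

definition distant :: "('a::{ring,monoid_mult} \<times> 'a) set \<Rightarrow> ('a \<times> 'a) set \<Rightarrow> bool" where
  "distant p q = (\<exists>a b c d. admissible (a, b) \<and> admissible (c, d) \<and>
      p = cyc (a, b) \<and> q = cyc (c, d) \<and> M2 a b c d \<in> GL2)"

definition component :: "('a::{ring,monoid_mult} \<times> 'a) set \<Rightarrow> ('a \<times> 'a) set set" where
  "component p = {q. (\<lambda>x y. distant x y \<or> distant y x)\<^sup>*\<^sup>* p q}"

definition C_infty :: "('a::{ring,monoid_mult} \<times> 'a) set set" where
  "C_infty = component (cyc (1, 0))"

definition stabilizer :: "('a::{ring,monoid_mult} \<times> 'a) set set \<Rightarrow> 'a mat2 set" where
  "stabilizer C = {G \<in> GL2. (\<lambda>p. pt_act p G) ` C = C}"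

definition B12 :: "'a::{ring,monoid_mult} \<Rightarrow> 'a mat2" where
  "B12 t = M2 1 t 0 1"

definition B21 :: "'a::{ring,monoid_mult} \<Rightarrow> 'a mat2" where
  "B21 t = M2 1 0 t 1"

definition GE2_gens :: "'a::{ring,monoid_mult} mat2 set" where
  "GE2_gens = range B12 \<union> range B21 \<union>
     {M2 u 0 0 v | u v. M2 u 0 0 v \<in> GL2}"

inductive_set GE2 :: "'a::{ring,monoid_mult} mat2 set" where
  one: "mone \<in> GE2"
| gen: "g \<in> GE2_gens \<Longrightarrow> g \<in> GE2"
| mult: "M \<in> GE2 \<Longrightarrow> N \<in> GE2 \<Longrightarrow> mmul M N \<in> GE2"
| inv: "M \<in> GE2 \<Longrightarrow> mmul M N = mone \<Longrightarrow> mmul N M = mone \<Longrightarrow> N \<in> GE2"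

end

theory Submission
  imports Defs
begin

text \<open>
  Every point of the component of \<open>R(1,0)\<close> is the image of \<open>R(1,0)\<close> under some element of
  \<open>GE\<^sub>2(R)\<close>: a neighbour \<open>R(c,d)\<close> of \<open>R(1,0)\<close> is the second row of a matrix \<open>(a 0; c d)\<close>
  with \<open>a\<close> a unit, and such lower triangular matrices lie in \<open>GE\<^sub>2(R)\<close>; moving along a path
  in the distant graph then only multiplies by elements of \<open>GE\<^sub>2(R)\<close>. Conversely the
  generators of \<open>GE\<^sub>2(R)\<close> send \<open>R(1,0)\<close> into its component. Since \<open>GL\<^sub>2(R)\<close> permutes
  components, a matrix stabilises \<open>C\<^sub>\<infinity>\<close> iff it maps \<open>R(1,0)\<close> into \<open>C\<^sub>\<infinity>\<close>, so the stabiliser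
  is \<open>GE\<^sub>2(R)\<close> times the stabiliser of the point \<open>R(1,0)\<close>, which is contained in \<open>GE\<^sub>2(R)\<close>.
\<close>

lemma mmul_assoc:
  fixes A B C :: "'a::{ring,monoid_mult} mat2"
  shows "mmul (mmul A B) C = mmul A (mmul B C)"
  by (cases A; cases B; cases C) (simp add: algebra_simps)

lemma mmul_mone [simp]:
  fixes A :: "'a::{ring,monoid_mult} mat2"
  shows "mmul mone A = A" "mmul A mone = A"
  by (cases A, simp add: mone_def)+

lemma vmul_mmul:
  fixes A B :: "'a::{ring,monoid_mult} mat2"
  shows "vmul (vmul v A) B = vmul v (mmul A B)"
  by (cases v; cases A; cases B) (simp add: algebra_simps)

lemma pt_act_mmul:
  fixes A B :: "'a::{ring,monoid_mult} mat2"
  shows "pt_act (pt_act p A) B = pt_act p (mmul A B)"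
  unfolding pt_act_def by (auto simp: vmul_mmul image_image)

lemma pt_act_mone [simp]: "pt_act p (mone :: 'a::{ring,monoid_mult} mat2) = p"
proof -
  have "vmul v (mone :: 'a mat2) = v" for v by (cases v) (simp add: mone_def)
  then show ?thesis unfolding pt_act_def by simp
qed

lemma pt_act_cyc:
  fixes G :: "'a::{ring,monoid_mult} mat2"
  shows "pt_act (cyc v) G = cyc (vmul v G)"
proof -
  obtain a b where v: "v = (a, b)" by (cases v)
  have "vmul (r * a, r * b) G = (r * fst (vmul (a, b) G), r * snd (vmul (a, b) G))" for r
    by (cases G) (simp add: algebra_simps)
  moreover have "cyc w = range (\<lambda>r. (r * fst w, r * snd w))" for w :: "'a \<times> 'a"
    by (auto simp: cyc_def)
  ultimately show ?thesis unfolding pt_act_def v by (simp add: image_image)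
qed

lemma GL2_mmul:
  fixes A B :: "'a::{ring,monoid_mult} mat2"
  assumes "A \<in> GL2" "B \<in> GL2"
  shows "mmul A B \<in> GL2"
proof -
  obtain A' B' where A': "mmul A A' = mone" "mmul A' A = mone"
    and B': "mmul B B' = mone" "mmul B' B = mone"
    using assms by (auto simp: GL2_def)
  have "mmul (mmul A B) (mmul B' A') = mone"
    by (metis A'(1) B'(1) mmul_assoc mmul_mone(2))
  moreover have "mmul (mmul B' A') (mmul A B) = mone"
    by (metis A'(2) B'(2) mmul_assoc mmul_mone(2))
  ultimately show ?thesis by (auto simp: GL2_def)
qed

lemma GL2_inverse:
  fixes A N :: "'a::{ring,monoid_mult} mat2"
  shows "mmul A N = mone \<Longrightarrow> mmul N A = mone \<Longrightarrow> N \<in> GL2"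
  by (auto simp: GL2_def)

lemma GL2_swap: "M2 0 1 1 0 \<in> (GL2 :: 'a::{ring,monoid_mult} mat2 set)"
  by (rule GL2_inverse[of "M2 0 1 1 0"]) (simp_all add: mone_def)

lemma B12_GL2: "B12 t \<in> (GL2 :: 'a::{ring,monoid_mult} mat2 set)"
  by (rule GL2_inverse[of "B12 (- t)"]) (simp_all add: B12_def mone_def)

lemma GL2_lower_triangular_right_inverse:
  fixes a c d :: "'a::{ring,monoid_mult}"
  assumes "M2 a 0 c d \<in> GL2"
  shows "\<exists>x. a * x = 1"
proof -
  obtain N where "mmul (M2 a 0 c d) N = mone" using assms by (auto simp: GL2_def)
  then show ?thesis by (cases N) (auto simp: mone_def)
qed

lemma distant_iff:
  "distant p q \<longleftrightarrow>
     (\<exists>a b c d. p = cyc (a, b) \<and> q = cyc (c, d) \<and> M2 a b c d \<in> (GL2 :: 'a::{ring,monoid_mult} mat2 set))"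
    (is "_ \<longleftrightarrow> ?rhs")
proof
  assume ?rhs
  then obtain a b c d where *: "p = cyc (a, b)" "q = cyc (c, d)" "M2 a b c d \<in> (GL2 :: 'a mat2 set)"
    by blast
  have "mmul (M2 0 1 1 0) (M2 a b c d) \<in> GL2" using GL2_mmul[OF GL2_swap *(3)] .
  then have "M2 c d a b \<in> GL2" by simp
  with * show "distant p q" unfolding distant_def admissible_def by fastforce
qed (auto simp: distant_def)

lemma distant_sym: "distant p q \<Longrightarrow> distant q (p :: ('a::{ring,monoid_mult} \<times> 'a) set)"
proof -
  assume "distant p q"
  then obtain a b c d where *: "p = cyc (a, b)" "q = cyc (c, d)" "M2 a b c d \<in> (GL2 :: 'a mat2 set)"
    by (auto simp: distant_iff)
  have "mmul (M2 0 1 1 0) (M2 a b c d) \<in> GL2" using GL2_mmul[OF GL2_swap *(3)] .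
  with * show ?thesis by (auto simp: distant_iff)
qed

lemma distant_pt_act:
  fixes G :: "'a::{ring,monoid_mult} mat2"
  assumes "G \<in> GL2" "distant p q"
  shows "distant (pt_act p G) (pt_act q G)"
proof -
  obtain a b c d where *: "p = cyc (a, b)" "q = cyc (c, d)" "M2 a b c d \<in> (GL2 :: 'a mat2 set)"
    using assms(2) by (auto simp: distant_iff)
  have "mmul (M2 a b c d) G \<in> GL2" using GL2_mmul[OF *(3) assms(1)] .
  then show ?thesis unfolding * pt_act_cyc distant_iff by (cases G) auto
qed

lemma component_eq_rtranclp: "component p = {q. distant\<^sup>*\<^sup>* p q}"
proof -
  have "(\<lambda>x y. distant x y \<or> distant y x) = distant"
    using distant_sym by blast
  then show ?thesis unfolding component_def by (rule arg_cong)
qed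

lemma self_in_component: "p \<in> component p"
  by (simp add: component_eq_rtranclp)

lemma component_eq_if_mem: "q \<in> component p \<Longrightarrow> component q = component p"
proof -
  assume "q \<in> component p"
  moreover have "symp distant"
    by (auto intro: sympI distant_sym)
  ultimately have "distant\<^sup>*\<^sup>* q p"
    by (auto simp: component_eq_rtranclp dest: sympD[OF symp_rtranclp])
  with \<open>q \<in> component p\<close> show ?thesis
    by (auto simp: component_eq_rtranclp intro: rtranclp_trans)
qed

lemma pt_act_component_subset:
  fixes G :: "'a::{ring,monoid_mult} mat2"
  assumes "G \<in> GL2"
  shows "(\<lambda>q. pt_act q G) ` component p \<subseteq> component (pt_act p G)"
proof clarify
  fix q assume "q \<in> component p"
  then have "distant\<^sup>*\<^sup>* p q" by (simp add: component_eq_rtranclp)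
  then have "distant\<^sup>*\<^sup>* (pt_act p G) (pt_act q G)"
    by induction (auto intro: rtranclp.rtrancl_into_rtrancl distant_pt_act[OF assms])
  then show "pt_act q G \<in> component (pt_act p G)" by (simp add: component_eq_rtranclp)
qed

lemma pt_act_component:
  fixes G :: "'a::{ring,monoid_mult} mat2"
  assumes "G \<in> GL2"
  shows "(\<lambda>q. pt_act q G) ` component p = component (pt_act p G)"
proof
  obtain N where N: "mmul G N = mone" "mmul N G = mone" "N \<in> GL2"
    using assms by (auto simp: GL2_def)
  show "component (pt_act p G) \<subseteq> (\<lambda>q. pt_act q G) ` component p"
  proof
    fix q assume "q \<in> component (pt_act p G)"
    then have "pt_act q N \<in> component p"
      using pt_act_component_subset[OF N(3)] by (force simp: pt_act_mmul N(1))
    moreover have "q = pt_act (pt_act q N) G" by (simp add: pt_act_mmul N(2))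
    ultimately show "q \<in> (\<lambda>q. pt_act q G) ` component p" by blast
  qed
qed (rule pt_act_component_subset[OF assms])

lemma stabilizer_mmul:
  fixes G H :: "'a::{ring,monoid_mult} mat2"
  assumes "G \<in> stabilizer C" "H \<in> stabilizer C"
  shows "mmul G H \<in> stabilizer C"
proof -
  have "(\<lambda>p. pt_act p (mmul G H)) ` C = (\<lambda>p. pt_act p H) ` (\<lambda>p. pt_act p G) ` C"
    by (simp add: image_image pt_act_mmul)
  with assms show ?thesis by (simp add: stabilizer_def GL2_mmul)
qed

lemma stabilizer_inverse:
  fixes G N :: "'a::{ring,monoid_mult} mat2"
  assumes "G \<in> stabilizer C" "mmul G N = mone" "mmul N G = mone"
  shows "N \<in> stabilizer C"
proof -
  have "(\<lambda>p. pt_act p N) ` C = (\<lambda>p. pt_act p N) ` (\<lambda>p. pt_act p G) ` C"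
    using assms(1) by (simp add: stabilizer_def)
  also have "\<dots> = C" by (simp add: image_image pt_act_mmul assms(2))
  finally show ?thesis using GL2_inverse[OF assms(2,3)] by (simp add: stabilizer_def)
qed

lemma stabilizer_C_infty_iff:
  fixes G :: "'a::{ring,monoid_mult} mat2"
  assumes "G \<in> GL2"
  shows "G \<in> stabilizer C_infty \<longleftrightarrow> pt_act (cyc (1, 0)) G \<in> C_infty"
proof
  assume "G \<in> stabilizer C_infty"
  then show "pt_act (cyc (1, 0)) G \<in> C_infty"
    using self_in_component unfolding stabilizer_def C_infty_def by blast
next
  assume "pt_act (cyc (1, 0)) G \<in> C_infty"
  then have "component (pt_act (cyc (1, 0)) G) = C_infty"
    unfolding C_infty_def by (rule component_eq_if_mem)
  with assms show "G \<in> stabilizer C_infty"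
    by (simp add: stabilizer_def C_infty_def pt_act_component)
qed

lemma GE2_subset_GL2: "M \<in> GE2 \<Longrightarrow> M \<in> (GL2 :: 'a::{ring,monoid_mult} mat2 set)"
proof (induction rule: GE2.induct)
  case one
  show ?case by (rule GL2_inverse[of mone]) simp_all
next
  case (gen g)
  have "B21 t \<in> (GL2 :: 'a mat2 set)" for t
    by (rule GL2_inverse[of "B21 (- t)"]) (simp_all add: B21_def mone_def)
  with gen show ?case by (auto simp: GE2_gens_def B12_GL2)
qed (auto intro: GL2_mmul GL2_inverse)

lemma GE2_inverse:
  fixes G :: "'a::{ring,monoid_mult} mat2"
  assumes "G \<in> GE2"
  obtains N where "N \<in> GE2" "mmul G N = mone" "mmul N G = mone"
  using GE2_subset_GL2[OF assms] GE2.inv[OF assms] by (auto simp: GL2_def)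

lemma lower_triangular_in_GE2:
  fixes a c d s :: "'a::{ring,monoid_mult}"
  assumes "s * a = 1" "M2 a 0 c d \<in> GL2"
  shows "M2 a 0 c d \<in> GE2"
proof -
  obtain x where ax: "a * x = 1" using GL2_lower_triangular_right_inverse[OF assms(2)] by blast
  have xa: "x * a = 1"
    by (metis assms(1) ax mult.assoc mult_1_left)
  have B21: "B21 t \<in> (GE2 :: 'a mat2 set)" for t
    by (intro GE2.gen) (simp add: GE2_gens_def)
  have "mmul (B21 (- (c * x))) (M2 a 0 c d) = M2 a 0 0 d"
    by (simp add: B21_def mult.assoc xa)
  then have "M2 a 0 0 d \<in> GL2"
    using GL2_mmul[OF GE2_subset_GL2[OF B21] assms(2)] by metis
  then have "M2 a 0 0 d \<in> GE2" by (intro GE2.gen) (auto simp: GE2_gens_def)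
  moreover have "mmul (B21 (c * x)) (M2 a 0 0 d) = M2 a 0 c d"
    by (simp add: B21_def mult.assoc xa)
  ultimately show ?thesis using GE2.mult[OF B21] by metis
qed

lemma cyc_eq_e1_imp:
  fixes a b :: "'a::{ring,monoid_mult}"
  assumes "cyc (a, b) = cyc (1, 0)"
  shows "b = 0" "\<exists>s. s * a = 1"
proof -
  have "v \<in> cyc v" for v :: "'a \<times> 'a"
    unfolding cyc_def by (metis (mono_tags) CollectI mult_1_left prod.collapse)
  then have "(a, b) \<in> cyc (1, 0)" "(1, 0) \<in> cyc (a, b)"
    using assms by metis+
  then show "b = 0" "\<exists>s. s * a = 1" unfolding cyc_def by auto
qed

text \<open>A matrix fixing the point \<open>R(1,0)\<close> has the shape \<open>(a 0; c d)\<close> with \<open>a\<close> a unit.\<close>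

lemma GL2_fixing_e1_in_GE2:
  fixes G :: "'a::{ring,monoid_mult} mat2"
  assumes "G \<in> GL2" "pt_act (cyc (1, 0)) G = cyc (1, 0)"
  shows "G \<in> GE2"
proof -
  obtain a b c d where G: "G = M2 a b c d" by (cases G)
  have "cyc (a, b) = cyc (1, 0)" using assms(2) by (simp add: G pt_act_cyc)
  with cyc_eq_e1_imp obtain s where "b = 0" "s * a = 1" by blast
  with assms(1) show ?thesis by (simp add: G lower_triangular_in_GE2)
qed

lemma distant_e1_in_GE2_orbit:
  fixes q :: "('a::{ring,monoid_mult} \<times> 'a) set"
  assumes "distant (cyc (1, 0)) q"
  shows "\<exists>H\<in>GE2. q = pt_act (cyc (1, 0)) H"
proof -
  obtain a b c d where *: "cyc (1, 0) = cyc (a, b)" "q = cyc (c, d)" "M2 a b c d \<in> (GL2 :: 'a mat2 set)"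
    using assms by (auto simp: distant_iff)
  define J :: "'a mat2" where "J = mmul (mmul (B12 1) (B21 (- 1))) (B12 1)"
  have J_eq: "J = M2 0 1 (- 1) 0" by (simp add: J_def B12_def B21_def)
  have "pt_act (cyc (1, 0)) (M2 a b c d) = cyc (1, 0)"
    unfolding pt_act_cyc using *(1) by simp
  with *(3) have "M2 a b c d \<in> GE2" by (rule GL2_fixing_e1_in_GE2)
  moreover have "J \<in> GE2"
    unfolding J_def by (intro GE2.mult GE2.gen) (auto simp: GE2_gens_def)
  ultimately have "mmul J (M2 a b c d) \<in> GE2" by (simp add: GE2.mult)
  moreover have "pt_act (cyc (1, 0)) (mmul J (M2 a b c d)) = q"
    by (simp add: *(2) pt_act_cyc J_eq)
  ultimately show ?thesis by metis
qed

lemma C_infty_subset_GE2_orbit: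
  fixes p :: "('a::{ring,monoid_mult} \<times> 'a) set"
  assumes "p \<in> C_infty"
  shows "\<exists>H\<in>GE2. p = pt_act (cyc (1, 0)) H"
proof -
  have "distant\<^sup>*\<^sup>* (cyc (1, 0)) p" using assms by (simp add: C_infty_def component_eq_rtranclp)
  then show ?thesis
  proof induction
    case base
    show ?case using GE2.one by force
  next
    case (step y z)
    then obtain G where G: "G \<in> GE2" "y = pt_act (cyc (1, 0)) G" by blast
    obtain N where N: "N \<in> GE2" "mmul G N = mone" "mmul N G = mone"
      using GE2_inverse[OF G(1)] by blast
    have "distant (pt_act y N) (pt_act z N)"
      using step(2) distant_pt_act GE2_subset_GL2[OF N(1)] by blast
    moreover have "pt_act y N = cyc (1, 0)" by (simp add: G(2) N(2) pt_act_mmul)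
    ultimately obtain H where H: "H \<in> GE2" "pt_act z N = pt_act (cyc (1, 0)) H"
      using distant_e1_in_GE2_orbit by metis
    have "z = pt_act (pt_act z N) G" by (simp add: pt_act_mmul N(3))
    also have "\<dots> = pt_act (cyc (1, 0)) (mmul H G)" by (simp add: H(2) pt_act_mmul)
    finally show ?case using GE2.mult[OF H(1) G(1)] by blast
  qed
qed

lemma GE2_gens_in_stabilizer:
  fixes g :: "'a::{ring,monoid_mult} mat2"
  assumes "g \<in> GE2_gens"
  shows "g \<in> stabilizer C_infty"
proof -
  have e1: "cyc (1 :: 'a, 0 :: 'a) \<in> C_infty" unfolding C_infty_def by (rule self_in_component)
  have "pt_act (cyc (1, 0)) g \<in> C_infty"
    using assms unfolding GE2_gens_def
  proof (elim UnE rangeE CollectE exE conjE)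
    fix t assume g: "g = B12 t"
    text \<open>\<open>R(1,t)\<close> is reached from \<open>R(1,0)\<close> through \<open>R(0,1)\<close>.\<close>
    have "M2 1 0 0 1 \<in> (GL2 :: 'a mat2 set)" "M2 1 t 0 1 \<in> (GL2 :: 'a mat2 set)"
      using GL2_inverse[of mone mone] B12_GL2[of t] by (simp_all add: mone_def B12_def)
    then have "distant (cyc (1, 0)) (cyc (0 :: 'a, 1 :: 'a))" "distant (cyc (0, 1)) (cyc (1 :: 'a, t))"
      using distant_sym unfolding distant_iff by blast+
    then show ?thesis
      by (simp add: g B12_def pt_act_cyc C_infty_def component_eq_rtranclp)
  next
    fix t assume "g = B21 t"
    then show ?thesis using e1 by (simp add: B21_def pt_act_cyc)
  next
    fix u v assume g: "g = M2 u 0 0 v" and "M2 u 0 0 v \<in> GL2"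
    then obtain N where "mmul N (M2 u 0 0 v) = mone" by (auto simp: GL2_def)
    then obtain x where xu: "x * u = 1" by (cases N) (auto simp: mone_def)
    have "cyc (u, 0) = cyc (1 :: 'a, 0)"
      unfolding cyc_def by auto (metis xu mult.assoc mult_1_right)
    then show ?thesis using e1 by (simp add: g pt_act_cyc)
  qed
  with GE2_subset_GL2[OF GE2.gen[OF assms]] show ?thesis
    by (simp add: stabilizer_C_infty_iff)
qed

lemma GE2_subset_stabilizer: "G \<in> GE2 \<Longrightarrow> G \<in> stabilizer (C_infty :: ('a::{ring,monoid_mult} \<times> 'a) set set)"
proof (induction rule: GE2.induct)
  case one
  show ?case by (simp add: stabilizer_def GL2_inverse[of mone])
qed (auto intro: GE2_gens_in_stabilizer stabilizer_mmul stabilizer_inverse)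

theorem mainTheorem3:
  shows "stabilizer (C_infty :: ('a::{ring,monoid_mult} \<times> 'a) set set) = GE2"
proof
  show "stabilizer C_infty \<subseteq> (GE2 :: 'a mat2 set)"
  proof
    fix G :: "'a mat2" assume G: "G \<in> stabilizer C_infty"
    then have "G \<in> GL2" by (simp add: stabilizer_def)
    with G obtain H where H: "H \<in> GE2" "pt_act (cyc (1, 0)) G = pt_act (cyc (1, 0)) H"
      using stabilizer_C_infty_iff C_infty_subset_GE2_orbit by metis
    obtain N where N: "N \<in> GE2" "mmul H N = mone" "mmul N H = mone"
      using GE2_inverse[OF H(1)] by blast
    have "mmul G N \<in> GE2"
    proof (rule GL2_fixing_e1_in_GE2)
      show "mmul G N \<in> GL2" using \<open>G \<in> GL2\<close> GE2_subset_GL2[OF N(1)] by (rule GL2_mmul)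
      show "pt_act (cyc (1, 0)) (mmul G N) = cyc (1, 0)"
        by (simp flip: pt_act_mmul add: H(2)) (simp add: pt_act_mmul N(2))
    qed
    moreover have "G = mmul (mmul G N) H" by (simp add: mmul_assoc N(3))
    ultimately show "G \<in> GE2" using GE2.mult H(1) by metis
  qed
qed (use GE2_subset_stabilizer in blast)

end
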